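(* Let $U$ be a finite ground set, $p$ a positive integer with $p\le |U|$, $\lambda\ge 0$, $d$ an $\alpha$-relaxed semi-metric distance on $U$ (for some $\alpha\ge 1$), and $f:2^U\to\mathbb{R}_{\ge 0}$ a non-negative monotone submodular set function. Consider the problem of finding $S\subseteq U$ with $|S|=p$ maximizing $\phi(S)=f(S)+\lambda\, d(S)$. Let $G$ be the set returned by the following greedy algorithm: start with $S=\emptyset$; while $|S|<p$, pick $u\in U\setminus S$ maximizing $\phi'_u(S)=\tfrac12\big(f(S\cup\{u\})-f(S)\big)+\lambda\sum_{v\in S}d(u,v)$ (ties broken arbitrarily) and set $S=S\cup\{u\}$. Then $$\phi(G)\;\ge\;\frac{1}{2\alpha}\,\phi(O),$$ where $O$ is an optimal solution, i.e. $\phi(O)=\max\{\phi(S): S\subseteq U,\ |S|=p\}$.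
   Context: An $\alpha$-relaxed semi-metric distance on $U$ (with $\alpha\ge 1$) is a function $d:U\times U\to\mathbb{R}_{\ge 0}$ with $d(u,v)=d(v,u)$, $d(u,u)=0$, satisfying $d(u,v)\le \alpha\,(d(v,w)+d(w,u))$ for all $u,v,w\in U$. For $S\subseteq U$, $d(S)=\sum_{\{u,v\}\subseteq S,\,u\ne v} d(u,v)$. A set function $f$ is monotone if $f(S)\le f(T)$ whenever $S\subseteq T$, and submodular if $f(S\cup\{u\})-f(S)\ge f(T\cup\{u\})-f(T)$ whenever $S\subseteq T$ and $u\notin T$. *)

theory Defs
  imports Complex_Main
begin

definition relaxed_semimetric :: "real \<Rightarrow> 'a set \<Rightarrow> ('a \<Rightarrow> 'a \<Rightarrow> real) \<Rightarrow> bool" where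
  "relaxed_semimetric \<alpha> U d \<longleftrightarrow> \<alpha> \<ge> 1 \<and>
     (\<forall>u\<in>U. \<forall>v\<in>U. d u v \<ge> 0 \<and> d u v = d v u) \<and>
     (\<forall>u\<in>U. d u u = 0) \<and>
     (\<forall>u\<in>U. \<forall>v\<in>U. \<forall>w\<in>U. d u v \<le> \<alpha> * (d v w + d w u))"

(* d(S) = sum over unordered pairs {u,v} \<subseteq> S, u \<noteq> v, of d(u,v);
   each unordered pair appears twice among ordered pairs, hence the 1/2 *)
definition dsum :: "('a \<Rightarrow> 'a \<Rightarrow> real) \<Rightarrow> 'a set \<Rightarrow> real" where
  "dsum d S = (\<Sum>(u,v)\<in>{(u,v). u \<in> S \<and> v \<in> S \<and> u \<noteq> v}. d u v) / 2"

definition monotone_on_subsets :: "'a set \<Rightarrow> ('a set \<Rightarrow> real) \<Rightarrow> bool" where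
  "monotone_on_subsets U f \<longleftrightarrow> (\<forall>S T. S \<subseteq> T \<and> T \<subseteq> U \<longrightarrow> f S \<le> f T)"

definition submodular_on_subsets :: "'a set \<Rightarrow> ('a set \<Rightarrow> real) \<Rightarrow> bool" where
  "submodular_on_subsets U f \<longleftrightarrow> (\<forall>S T u. S \<subseteq> T \<and> T \<subseteq> U \<and> u \<in> U \<and> u \<notin> T \<longrightarrow>
      f (insert u S) - f S \<ge> f (insert u T) - f T)"

definition phi :: "('a set \<Rightarrow> real) \<Rightarrow> real \<Rightarrow> ('a \<Rightarrow> 'a \<Rightarrow> real) \<Rightarrow> 'a set \<Rightarrow> real" where
  "phi f lam d S = f S + lam * dsum d S"

definition phi' :: "('a set \<Rightarrow> real) \<Rightarrow> real \<Rightarrow> ('a \<Rightarrow> 'a \<Rightarrow> real) \<Rightarrow> 'a set \<Rightarrow> 'a \<Rightarrow> real" where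
  "phi' f lam d S u = (f (insert u S) - f S) / 2 + lam * (\<Sum>v\<in>S. d u v)"

(* xs is a possible run of the greedy algorithm (any tie-breaking): the k-th picked
   element lies in U minus the current set and maximizes phi' over it *)
definition greedy_run :: "'a set \<Rightarrow> nat \<Rightarrow> ('a set \<Rightarrow> real) \<Rightarrow> real \<Rightarrow> ('a \<Rightarrow> 'a \<Rightarrow> real) \<Rightarrow> 'a list \<Rightarrow> bool" where
  "greedy_run U p f lam d xs \<longleftrightarrow> length xs = p \<and>
     (\<forall>k<p. xs ! k \<in> U - set (take k xs) \<and>
        (\<forall>w\<in>U - set (take k xs). phi' f lam d (set (take k xs)) w \<le> phi' f lam d (set (take k xs)) (xs ! k)))"

end

theory Submission
  imports Defs
begin

text \<open>
  Write \<open>G\<^sub>k\<close> for the first \<open>k\<close> greedy picks and \<open>B = O - G\<^sub>k\<close>. The greedy gain at step \<open>k\<close>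
  dominates the average of \<open>\<phi>'\<^sub>v(G\<^sub>k)\<close> over \<open>v \<in> B\<close>. By submodularity the \<open>f\<close>-parts of
  these gains add up to at least \<open>f(O) - f(G)\<close>, and the relaxed triangle inequality, applied
  to the split of \<open>O \<union> G\<^sub>k\<close> into \<open>O \<inter> G\<^sub>k\<close>, \<open>O - G\<^sub>k\<close> and \<open>G\<^sub>k - O\<close>, shows that the distance
  parts average at least \<open>k d(O) / (\<alpha> p (p - 1))\<close>. Since the gains telescope to
  \<open>(f(G) - f(\<emptyset>))/2 + \<lambda> d(G)\<close>, summing over \<open>k < p\<close> yields
  \<open>f(G) + \<lambda> d(G) \<ge> f(O)/2 + \<lambda> d(O)/(2\<alpha>) \<ge> \<phi>(O)/(2\<alpha>)\<close>.
\<close>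


text \<open>Here \<open>a, b, c\<close> are the sizes of \<open>O \<inter> G\<close>, \<open>O - G\<close>, \<open>G - O\<close>; \<open>P, Q\<close> the inner sums of
  the first two parts; \<open>AB, BC\<close> the sums between consecutive parts.\<close>

lemma cross_sum_split_inequality:
  fixes a b c \<alpha> P Q AB BC :: real
  assumes "a \<ge> 0" "c \<ge> 0" "c < b" "a + b \<ge> 2" "\<alpha> \<ge> 1" "Q \<ge> 0" "AB \<ge> 0" "BC \<ge> 0"
    and P_bound: "b * P \<le> 2 * \<alpha> * (a - 1) * AB"
    and Q_bound_AB: "a * Q \<le> 2 * \<alpha> * (b - 1) * AB"
    and Q_bound_BC: "c * Q \<le> 2 * \<alpha> * (b - 1) * BC"
  shows "(a + c) * b * (P + 2 * AB + Q) \<le> 2 * \<alpha> * (a + b) * (a + b - 1) * (AB + BC)"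
proof -
  define p where "p = a + b"
  define i where "i = a + c"
  have i: "0 \<le> i" "i < p" using assms by (auto simp: p_def i_def)
  have "i * b * P \<le> 2 * \<alpha> * i * (a - 1) * AB"
    using mult_left_mono[OF P_bound i(1)] by (simp add: algebra_simps)
  moreover have "2 * i * b * AB \<le> 2 * \<alpha> * i * b * AB"
    using assms i by (simp add: mult_right_mono mult_left_mono)
  moreover have "b * i * Q \<le> 2 * \<alpha> * ((p - 1) * (p - i) * AB + p * (p - 1) * BC)"
  proof -
    have pi: "(p - 1) * (p - i) \<ge> 0" "p * (p - 1) \<ge> 0"
      using assms i by (simp_all add: p_def)
    have "(p - 1) * (b * i * Q) = (p - 1) * (p - i) * (a * Q) + p * (p - 1) * (c * Q)"
      by (simp add: p_def i_def algebra_simps)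
    also have "\<dots> \<le> (p - 1) * (p - i) * (2 * \<alpha> * (b - 1) * AB) + p * (p - 1) * (2 * \<alpha> * (b - 1) * BC)"
      using pi by (intro add_mono mult_left_mono Q_bound_AB Q_bound_BC)
    also have "\<dots> = 2 * \<alpha> * (b - 1) * ((p - 1) * (p - i) * AB + p * (p - 1) * BC)"
      by (simp add: algebra_simps)
    also have "\<dots> \<le> 2 * \<alpha> * (p - 1) * ((p - 1) * (p - i) * AB + p * (p - 1) * BC)"
      using pi assms by (intro mult_right_mono mult_left_mono) (auto simp: p_def)
    finally show ?thesis
      using assms by (simp add: p_def mult.assoc mult.left_commute[of "a + b - 1"])
  qed
  ultimately have "i * b * (P + 2 * AB + Q) \<le> 2 * \<alpha> * i * (a - 1) * AB + 2 * \<alpha> * i * b * AB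
      + 2 * \<alpha> * ((p - 1) * (p - i) * AB + p * (p - 1) * BC)"
    by (simp add: algebra_simps)
  also have "\<dots> = 2 * \<alpha> * p * (p - 1) * (AB + BC)"
    by (simp add: p_def i_def algebra_simps)
  finally show ?thesis by (simp add: p_def i_def)
qed

definition cross_sum :: "('a \<Rightarrow> 'a \<Rightarrow> real) \<Rightarrow> 'a set \<Rightarrow> 'a set \<Rightarrow> real" where
  "cross_sum d X Y = (\<Sum>x\<in>X. \<Sum>y\<in>Y. d x y)"

lemma cross_sum_Un_left:
  "finite X \<Longrightarrow> finite Y \<Longrightarrow> X \<inter> Y = {} \<Longrightarrow> cross_sum d (X \<union> Y) Z = cross_sum d X Z + cross_sum d Y Z"
  unfolding cross_sum_def by (rule sum.union_disjoint)

lemma cross_sum_Un_right: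
  "finite Y \<Longrightarrow> finite Z \<Longrightarrow> Y \<inter> Z = {} \<Longrightarrow> cross_sum d X (Y \<union> Z) = cross_sum d X Y + cross_sum d X Z"
  unfolding cross_sum_def by (simp add: sum.union_disjoint sum.distrib)

context
  fixes \<alpha> :: real and U :: "'a set" and d :: "'a \<Rightarrow> 'a \<Rightarrow> real"
  assumes semimetric: "relaxed_semimetric \<alpha> U d"
begin

lemma relaxed_semimetric_ge_1: "\<alpha> \<ge> 1"
  using semimetric unfolding relaxed_semimetric_def by blast

lemma relaxed_semimetric_nonneg: "u \<in> U \<Longrightarrow> v \<in> U \<Longrightarrow> d u v \<ge> 0"
  using semimetric unfolding relaxed_semimetric_def by blast

lemma relaxed_semimetric_commute: "u \<in> U \<Longrightarrow> v \<in> U \<Longrightarrow> d u v = d v u"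
  using semimetric unfolding relaxed_semimetric_def by blast

lemma relaxed_semimetric_self: "u \<in> U \<Longrightarrow> d u u = 0"
  using semimetric unfolding relaxed_semimetric_def by blast

lemma relaxed_semimetric_triangle:
  "u \<in> U \<Longrightarrow> v \<in> U \<Longrightarrow> w \<in> U \<Longrightarrow> d u v \<le> \<alpha> * (d v w + d w u)"
  using semimetric unfolding relaxed_semimetric_def by blast

lemma cross_sum_nonneg: "X \<subseteq> U \<Longrightarrow> Y \<subseteq> U \<Longrightarrow> cross_sum d X Y \<ge> 0"
  unfolding cross_sum_def by (intro sum_nonneg) (auto intro!: relaxed_semimetric_nonneg)

lemma cross_sum_commute: "X \<subseteq> U \<Longrightarrow> Y \<subseteq> U \<Longrightarrow> cross_sum d X Y = cross_sum d Y X"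
  unfolding cross_sum_def
  by (subst sum.swap) (intro sum.cong refl, auto intro: relaxed_semimetric_commute)

lemma dsum_eq_cross_sum:
  assumes "finite S" "S \<subseteq> U"
  shows "dsum d S = cross_sum d S S / 2"
proof -
  have "(\<Sum>(u,v)\<in>{(u,v). u \<in> S \<and> v \<in> S \<and> u \<noteq> v}. d u v) = (\<Sum>(u,v)\<in>S \<times> S. d u v)"
    using assms by (intro sum.mono_neutral_left) (auto intro: relaxed_semimetric_self)
  then show ?thesis
    unfolding dsum_def cross_sum_def by (simp add: sum.cartesian_product)
qed

lemma dsum_insert:
  assumes "finite S" "S \<subseteq> U" "u \<in> U" "u \<notin> S"
  shows "dsum d (insert u S) = dsum d S + (\<Sum>v\<in>S. d u v)"
proof -
  have "cross_sum d (insert u S) (insert u S) = (\<Sum>v\<in>S. d u v) + (\<Sum>v\<in>S. d v u) + cross_sum d S S"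
    using assms by (simp add: cross_sum_def sum.distrib relaxed_semimetric_self)
  moreover have "(\<Sum>v\<in>S. d v u) = (\<Sum>v\<in>S. d u v)"
    using assms by (intro sum.cong refl) (auto simp: relaxed_semimetric_commute subset_iff)
  ultimately show ?thesis
    using assms by (simp add: dsum_eq_cross_sum)
qed

lemma cross_sum_self_le_sum_to_point:
  assumes "finite X" "X \<subseteq> U" "y \<in> U"
  shows "cross_sum d X X \<le> 2 * \<alpha> * (real (card X) - 1) * (\<Sum>x\<in>X. d x y)"
proof -
  have "cross_sum d X X = (\<Sum>u\<in>X. \<Sum>w\<in>X - {u}. d u w)"
  proof -
    have "(\<Sum>w\<in>X. d u w) = (\<Sum>w\<in>X - {u}. d u w)" if "u \<in> X" for u
      using that assms by (subst sum.remove[of X u]) (auto simp: relaxed_semimetric_self)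
    then show ?thesis unfolding cross_sum_def by simp
  qed
  also have "\<dots> \<le> (\<Sum>u\<in>X. \<Sum>w\<in>X - {u}. \<alpha> * (d w y + d y u))"
    using assms by (intro sum_mono) (auto intro!: relaxed_semimetric_triangle)
  also have "\<dots> = \<alpha> * ((\<Sum>u\<in>X. \<Sum>w\<in>X - {u}. d w y) + (\<Sum>u\<in>X. \<Sum>w\<in>X - {u}. d y u))"
    by (simp only: sum.distrib distrib_left sum_distrib_left)
  also have "(\<Sum>u\<in>X. \<Sum>w\<in>X - {u}. d w y) = (real (card X) - 1) * (\<Sum>x\<in>X. d x y)"
  proof -
    have "(\<Sum>u\<in>X. \<Sum>w\<in>X - {u}. d w y) = (\<Sum>u\<in>X. (\<Sum>w\<in>X. d w y) - d u y)"
      using assms by (intro sum.cong refl) (simp add: sum_diff1)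
    then show ?thesis by (simp add: sum_subtractf algebra_simps)
  qed
  also have "(\<Sum>u\<in>X. \<Sum>w\<in>X - {u}. d y u) = (real (card X) - 1) * (\<Sum>x\<in>X. d x y)"
  proof -
    have "(\<Sum>w\<in>X - {u}. d y u) = (real (card X) - 1) * d u y" if "u \<in> X" for u
      using that assms card_gt_0_iff[of X]
      by (auto simp: card_Diff_singleton relaxed_semimetric_commute subset_iff of_nat_diff)
    then show ?thesis by (simp add: sum_distrib_left)
  qed
  finally show ?thesis by (simp add: algebra_simps)
qed

lemma card_mult_cross_sum_self_le:
  assumes "finite X" "X \<subseteq> U" "finite Y" "Y \<subseteq> U"
  shows "real (card Y) * cross_sum d X X \<le> 2 * \<alpha> * (real (card X) - 1) * cross_sum d X Y"
proof -
  have "real (card Y) * cross_sum d X X = (\<Sum>y\<in>Y. cross_sum d X X)" by simp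
  also have "\<dots> \<le> (\<Sum>y\<in>Y. 2 * \<alpha> * (real (card X) - 1) * (\<Sum>x\<in>X. d x y))"
    using assms by (intro sum_mono cross_sum_self_le_sum_to_point) auto
  also have "\<dots> = 2 * \<alpha> * (real (card X) - 1) * cross_sum d X Y"
    unfolding cross_sum_def by (simp add: sum_distrib_left sum.swap[of _ Y])
  finally show ?thesis .
qed

lemma card_mult_dsum_le_cross_sum_diff:
  assumes "finite S" "S \<subseteq> U" "finite G" "G \<subseteq> U" "card G < card S"
  shows "real (card G) * real (card (S - G)) * dsum d S
     \<le> \<alpha> * real (card S) * (real (card S) - 1) * cross_sum d (S - G) G"
proof -
  define A where "A = S \<inter> G"
  define B where "B = S - G"
  define C where "C = G - S"
  have fin: "finite A" "finite B" "finite C" and sub: "A \<subseteq> U" "B \<subseteq> U" "C \<subseteq> U"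
    using assms by (auto simp: A_def B_def C_def)
  have partition_S: "S = A \<union> B" "A \<inter> B = {}" and partition_G: "G = A \<union> C" "A \<inter> C = {}"
    by (auto simp: A_def B_def C_def)
  have card_S: "card S = card A + card B" and card_G: "card G = card A + card C"
    using partition_S partition_G fin by (simp_all add: card_Un_disjoint)
  have dsum_S: "dsum d S = (cross_sum d A A + 2 * cross_sum d A B + cross_sum d B B) / 2"
    using partition_S fin sub assms
    by (simp add: dsum_eq_cross_sum cross_sum_Un_left cross_sum_Un_right cross_sum_commute[of B A])
  have cross_B_G: "cross_sum d (S - G) G = cross_sum d A B + cross_sum d B C"
    using partition_G fin sub unfolding B_def[symmetric] by (simp add: cross_sum_Un_right cross_sum_commute[of B A])
  show ?thesis
  proof (cases "card S \<ge> 2")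
    case False
    then have "card G = 0" "card S = 1" using assms(5) by linarith+
    then show ?thesis by simp
  next
    case True
    have "(real (card A) + real (card C)) * real (card B)
        * (cross_sum d A A + 2 * cross_sum d A B + cross_sum d B B)
      \<le> 2 * \<alpha> * (real (card A) + real (card B)) * (real (card A) + real (card B) - 1)
        * (cross_sum d A B + cross_sum d B C)"
    proof (rule cross_sum_split_inequality)
      show "real (card B) * cross_sum d A A \<le> 2 * \<alpha> * (real (card A) - 1) * cross_sum d A B"
        using card_mult_cross_sum_self_le fin sub by blast
      show "real (card A) * cross_sum d B B \<le> 2 * \<alpha> * (real (card B) - 1) * cross_sum d A B"
        using card_mult_cross_sum_self_le[of B A] fin sub cross_sum_commute[of B A] by simp
      show "real (card C) * cross_sum d B B \<le> 2 * \<alpha> * (real (card B) - 1) * cross_sum d B C"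
        using card_mult_cross_sum_self_le fin sub by blast
    qed (use True assms card_S card_G sub in \<open>auto intro: relaxed_semimetric_ge_1 cross_sum_nonneg\<close>)
    then show ?thesis
      unfolding B_def[symmetric] dsum_S cross_B_G[folded B_def] card_S card_G by simp
  qed
qed


lemma dsum_ratio_le_cross_sum_diff_ratio:
  assumes "finite S" "S \<subseteq> U" "finite G" "G \<subseteq> U" "card G < card S"
  shows "card G * dsum d S / (\<alpha> * card S * (real (card S) - 1)) \<le> cross_sum d (S - G) G / card (S - G)"
proof (cases "card S = 1")
  case True
  then show ?thesis using assms cross_sum_nonneg[of "S - G" G] by simp
next
  case False
  have "card S \<le> card G + card (S - G)"
    using card_Un_le[of G "S - G"] card_mono[of "G \<union> (S - G)" S] assms by auto
  then have "real (card (S - G)) > 0"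
    using assms by simp
  moreover have "\<alpha> * card S * (real (card S) - 1) > 0"
    using False assms relaxed_semimetric_ge_1 by simp
  ultimately show ?thesis
    using card_mult_dsum_le_cross_sum_diff[OF assms] by (simp add: field_simps)
qed
end

lemma dsum_card_le_1:
  assumes "finite S" "card S \<le> 1"
  shows "dsum d S = 0"
proof -
  have no_pairs: "{(u, v). u \<in> S \<and> v \<in> S \<and> u \<noteq> v} = {}"
    using assms by (auto simp: card_le_Suc0_iff_eq)
  show ?thesis unfolding dsum_def no_pairs by simp
qed

lemma double_sum_lessThan_of_nat: "2 * (\<Sum>k<p. real k) = real p * (real p - 1)"
  by (induction p) (auto simp: algebra_simps)

lemma sum_phi'_eq:
  "(\<Sum>v\<in>B. phi' f lam d G v) = (\<Sum>v\<in>B. f (insert v G) - f G) / 2 + lam * cross_sum d B G"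
  unfolding phi'_def cross_sum_def by (simp add: sum.distrib sum_distrib_left sum_divide_distrib)

lemma submodular_diff_le_sum_marginals:
  assumes "submodular_on_subsets U f" "finite B" "B \<subseteq> U" "G \<subseteq> U" "B \<inter> G = {}"
  shows "f (G \<union> B) - f G \<le> (\<Sum>v\<in>B. f (insert v G) - f G)"
  using assms(2-5)
proof (induction B rule: finite_induct)
  case empty
  then show ?case by simp
next
  case (insert v B)
  have "f (insert v (G \<union> B)) - f (G \<union> B) \<le> f (insert v G) - f G"
    using assms(1) insert unfolding submodular_on_subsets_def by simp
  then show ?case using insert by simp
qed

lemma monotone_submodular_diff_le_sum_marginals:
  assumes "monotone_on_subsets U f" "submodular_on_subsets U f"
    and "finite S" "S \<subseteq> U" "G \<subseteq> H" "H \<subseteq> U"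
  shows "f S - f H \<le> (\<Sum>v\<in>S - G. f (insert v G) - f G)"
proof -
  have "S \<subseteq> G \<union> (S - G)" "G \<union> (S - G) \<subseteq> U"
    using assms(4-6) by auto
  then have "f S \<le> f (G \<union> (S - G))"
    using assms(1) unfolding monotone_on_subsets_def by blast
  moreover have "f (G \<union> (S - G)) - f G \<le> (\<Sum>v\<in>S - G. f (insert v G) - f G)"
    by (rule submodular_diff_le_sum_marginals[OF assms(2)]) (use assms(3-6) in auto)
  moreover have "f G \<le> f H"
    using assms(1,5,6) unfolding monotone_on_subsets_def by blast
  ultimately show ?thesis by linarith
qed

context
  fixes U :: "'a set" and p :: nat and f :: "'a set \<Rightarrow> real" and lam :: real
    and d :: "'a \<Rightarrow> 'a \<Rightarrow> real" and xs :: "'a list"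
  assumes greedy: "greedy_run U p f lam d xs"
begin

lemma greedy_run_length: "length xs = p"
  using greedy unfolding greedy_run_def by blast

lemma greedy_run_pick: "k < p \<Longrightarrow> xs ! k \<in> U - set (take k xs)"
  using greedy unfolding greedy_run_def by blast

lemma greedy_run_gain_max:
  "k < p \<Longrightarrow> w \<in> U - set (take k xs) \<Longrightarrow>
    phi' f lam d (set (take k xs)) w \<le> phi' f lam d (set (take k xs)) (xs ! k)"
  using greedy unfolding greedy_run_def by blast

lemma greedy_run_set_take_Suc: "k < p \<Longrightarrow> set (take (Suc k) xs) = insert (xs ! k) (set (take k xs))"
  using greedy_run_length by (simp add: take_Suc_conv_app_nth)

lemma greedy_run_set_take_subset: "k \<le> p \<Longrightarrow> set (take k xs) \<subseteq> U"
proof (induction k)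
  case (Suc k)
  then show ?case using greedy_run_set_take_Suc[of k] greedy_run_pick[of k] by simp
qed simp

lemma greedy_run_card_set_take: "k \<le> p \<Longrightarrow> card (set (take k xs)) = k"
proof (induction k)
  case (Suc k)
  then show ?case using greedy_run_set_take_Suc[of k] greedy_run_pick[of k] by simp
qed simp

lemma greedy_run_set_subset: "set xs \<subseteq> U"
  using greedy_run_set_take_subset[of p] greedy_run_length by simp

lemma greedy_run_sum_gains:
  assumes "relaxed_semimetric \<alpha> U d"
  shows "(\<Sum>k<p. phi' f lam d (set (take k xs)) (xs ! k)) = (f (set xs) - f {}) / 2 + lam * dsum d (set xs)"
proof -
  define F where "F k = f (set (take k xs))" for k
  define D where "D k = dsum d (set (take k xs))" for k
  have "phi' f lam d (set (take k xs)) (xs ! k) = (F (Suc k) - F k) / 2 + lam * (D (Suc k) - D k)"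
    if "k < p" for k
    using that greedy_run_pick[OF that] greedy_run_set_take_subset[of k]
    by (simp add: phi'_def F_def D_def greedy_run_set_take_Suc dsum_insert[OF assms])
  then have "(\<Sum>k<p. phi' f lam d (set (take k xs)) (xs ! k))
      = (\<Sum>k<p. F (Suc k) - F k) / 2 + lam * (\<Sum>k<p. D (Suc k) - D k)"
    by (simp add: sum.distrib sum_distrib_left sum_divide_distrib)
  also have "\<dots> = (F p - F 0) / 2 + lam * (D p - D 0)"
    by (simp only: sum_lessThan_telescope)
  finally show ?thesis
    using greedy_run_length by (simp add: F_def D_def dsum_def)
qed

lemma greedy_gain_lower_bound:
  fixes \<alpha> :: real
  assumes semimetric: "relaxed_semimetric \<alpha> U d" and "lam \<ge> 0"
    and mono: "monotone_on_subsets U f" and submod: "submodular_on_subsets U f"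
    and Opt: "finite Opt" "Opt \<subseteq> U" "card Opt = p" and k: "k < p"
  shows "(f Opt - f (set xs)) / (2 * real p) + lam * (real k * dsum d Opt / (\<alpha> * real p * (real p - 1)))
    \<le> phi' f lam d (set (take k xs)) (xs ! k)"
proof -
  define G where "G = set (take k xs)"
  define B where "B = Opt - G"
  define marginals where "marginals = (\<Sum>v\<in>B. f (insert v G) - f G)"
  have G: "finite G" "G \<subseteq> U" "card G = k"
    using k greedy_run_set_take_subset greedy_run_card_set_take unfolding G_def by auto
  have B: "finite B" "B \<subseteq> U - G" "card B \<le> p"
    using Opt card_mono[of Opt B] unfolding B_def by auto
  have "card Opt \<le> card G + card B"
    using card_Un_le[of G B] card_mono[of "G \<union> B" Opt] B G unfolding B_def by auto
  then have B_pos: "real (card B) > 0"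
    using G Opt k by simp
  have gain: "marginals / 2 + lam * cross_sum d B G \<le> card B * phi' f lam d G (xs ! k)"
    using sum_bounded_above[of B "phi' f lam d G"] greedy_run_gain_max[OF k] B
    unfolding marginals_def sum_phi'_eq[symmetric] G_def by auto
  have "f Opt - f (set xs) \<le> marginals"
    using monotone_submodular_diff_le_sum_marginals[OF mono submod Opt(1,2) _ greedy_run_set_subset]
    unfolding marginals_def B_def G_def by (simp add: set_take_subset)
  moreover have "0 \<le> marginals"
    using mono B G unfolding marginals_def monotone_on_subsets_def
    by (intro sum_nonneg) (simp add: subset_insertI subset_iff)
  ultimately have f_part: "(f Opt - f (set xs)) / (2 * real p) \<le> marginals / (2 * card B)"
    using B B_pos by (intro frac_le) auto
  have "k * dsum d Opt / (\<alpha> * real p * (real p - 1)) \<le> cross_sum d B G / card B"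
    using dsum_ratio_le_cross_sum_diff_ratio[OF semimetric Opt(1,2) G(1,2)] G Opt k
    unfolding B_def by simp
  then have "(f Opt - f (set xs)) / (2 * real p) + lam * (real k * dsum d Opt / (\<alpha> * real p * (real p - 1)))
      \<le> marginals / (2 * card B) + lam * (cross_sum d B G / card B)"
    using f_part \<open>lam \<ge> 0\<close> by (intro add_mono mult_left_mono)
  also have "\<dots> = (marginals / 2 + lam * cross_sum d B G) / card B"
    by (simp add: add_divide_distrib)
  also have "\<dots> \<le> phi' f lam d G (xs ! k)"
    using gain B_pos by (simp add: divide_le_eq mult.commute)
  finally show ?thesis unfolding G_def .
qed

end

text \<open>For \<open>p = 1\<close> the denominator vanishes (and \<open>x / 0 = 0\<close>), which is harmless as then \<open>dsum d S = 0\<close>.\<close>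

lemma sum_gain_lower_bounds:
  fixes c lam \<alpha> :: real
  assumes "finite S" "card S = p" "0 < p" "\<alpha> > 0"
  shows "(\<Sum>k<p. c / (2 * real p) + lam * (real k * dsum d S / (\<alpha> * real p * (real p - 1))))
    = c / 2 + lam * (dsum d S / (2 * \<alpha>))"
proof (cases "p = 1")
  case True
  then show ?thesis using assms dsum_card_le_1[of S d] by simp
next
  case False
  have "(\<Sum>k<p. c / (2 * real p) + lam * (real k * dsum d S / (\<alpha> * real p * (real p - 1))))
      = p * (c / (2 * real p)) + lam * dsum d S / (\<alpha> * real p * (real p - 1)) * (\<Sum>k<p. real k)"
    by (simp add: sum.distrib sum_distrib_left sum_divide_distrib[symmetric] mult_ac)
  also have "(\<Sum>k<p. real k) = real p * (real p - 1) / 2"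
    using double_sum_lessThan_of_nat[of p] by simp
  also have "real p * (c / (2 * real p)) + lam * dsum d S / (\<alpha> * real p * (real p - 1)) * (real p * (real p - 1) / 2)
      = c / 2 + lam * (dsum d S / (2 * \<alpha>))"
    using False assms by (simp add: field_simps)
  finally show ?thesis .
qed

theorem theorem1:
  fixes U :: "'a set" and p :: nat and lam \<alpha> :: real
    and d :: "'a \<Rightarrow> 'a \<Rightarrow> real" and f :: "'a set \<Rightarrow> real"
    and xs :: "'a list" and Opt :: "'a set"
  assumes "finite U" and "0 < p" and "p \<le> card U" and "lam \<ge> 0"
    and "relaxed_semimetric \<alpha> U d"
    and "\<forall>S\<subseteq>U. f S \<ge> 0"
    and "monotone_on_subsets U f" and "submodular_on_subsets U f"
    and "greedy_run U p f lam d xs"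
    and "Opt \<subseteq> U" and "card Opt = p"
    and "\<forall>S. S \<subseteq> U \<and> card S = p \<longrightarrow> phi f lam d S \<le> phi f lam d Opt"
  shows "phi f lam d (set xs) \<ge> phi f lam d Opt / (2 * \<alpha>)"
proof -
  \<comment> \<open>The bound holds against every \<open>p\<close>-subset of \<open>U\<close>.\<close>
  have "\<alpha> \<ge> 1" using relaxed_semimetric_ge_1[OF assms(5)] .
  have Opt: "finite Opt" using assms(1,10) finite_subset by blast
  have "f {} \<ge> 0" using assms(6) by blast
  have "(f Opt - f (set xs)) / 2 + lam * (dsum d Opt / (2 * \<alpha>))
      = (\<Sum>k<p. (f Opt - f (set xs)) / (2 * real p) + lam * (real k * dsum d Opt / (\<alpha> * real p * (real p - 1))))"
    using sum_gain_lower_bounds[OF Opt assms(11,2)] \<open>\<alpha> \<ge> 1\<close> by simp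
  also have "\<dots> \<le> (\<Sum>k<p. phi' f lam d (set (take k xs)) (xs ! k))"
    by (intro sum_mono greedy_gain_lower_bound[OF assms(9,5,4,7,8) Opt assms(10,11)]) simp
  also have "\<dots> = (f (set xs) - f {}) / 2 + lam * dsum d (set xs)"
    using greedy_run_sum_gains[OF assms(9,5)] .
  finally have "f Opt / 2 + lam * (dsum d Opt / (2 * \<alpha>)) \<le> phi f lam d (set xs)"
    using \<open>f {} \<ge> 0\<close> unfolding phi_def by argo
  moreover have "f Opt / (2 * \<alpha>) \<le> f Opt / 2"
    using assms(6,10) \<open>\<alpha> \<ge> 1\<close> by (intro divide_left_mono) auto
  ultimately show ?thesis
    unfolding phi_def by (simp add: add_divide_distrib)
qed

end
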